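(* In the deterministic 4-user relay network described in the context (uplink gains $n_{tR}\geq n_{uR}\geq n_{vR}\geq n_{wR}$, downlink gains $n_{Ra}\geq n_{Rb}\geq n_{Rc}\geq n_{Rd}$, $\{t,u,v,w\}=\{a,b,c,d\}=\{1,2,3,4\}$), let $n^*=\min(n_{tR},n_{Ra})$ and, for distinct $p,q,r$, $\Phi(p,q,r)=\max\{R_{pq}+R_{pr}+\max(R_{qr},R_{rq}),\ R_{qp}+R_{qr}+\max(R_{pr},R_{rp}),\ R_{rp}+R_{rq}+\max(R_{pq},R_{qp})\}$ and $\Psi(p,q,r)=\max\{R_{qp}+R_{rp}+\max(R_{qr},R_{rq}),\ R_{pq}+R_{rq}+\max(R_{pr},R_{rp}),\ R_{pr}+R_{qr}+\max(R_{pq},R_{qp})\}$. Then the Simple Ordering Scheme (SOS) achieves every nonnegative integer rate tuple $(R_{ij})_{i\neq j\in\{1,2,3,4\}}$ that satisfies all of the inequalities $R_{wt}+R_{wu}+R_{wv}\leq n_{wR}$; $R_{ad}+R_{bd}+R_{cd}\leq n_{Rd}$; $R_{wt}+R_{wu}+R_{vt}+R_{vu}+\max(R_{vw},R_{wv})\leq n_{vR}$; $R_{ad}+R_{bd}+R_{ac}+R_{bc}+\max(R_{cd},R_{dc})\leq n_{Rc}$; $R_{ut}+R_{vt}+R_{wt}+\Phi(u,v,w)\leq n_{uR}$; $R_{tu}+R_{tv}+R_{tw}+\Phi(u,v,w)\leq n_{tR}$; $R_{ut}+R_{uv}+R_{uw}+\Phi(t,v,w)\leq n_{tR}$; $R_{vt}+R_{vu}+R_{vw}+\Phi(t,u,w)\leq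 n_{tR}$; $R_{wt}+R_{wu}+R_{wv}+\Phi(t,u,v)\leq n_{tR}$; $R_{ab}+R_{ac}+R_{ad}+\Psi(b,c,d)\leq n_{Rb}$; $R_{ba}+R_{ca}+R_{da}+\Psi(b,c,d)\leq n_{Ra}$; $R_{ab}+R_{cb}+R_{db}+\Psi(a,c,d)\leq n_{Ra}$; $R_{ac}+R_{bc}+R_{dc}+\Psi(a,b,d)\leq n_{Ra}$; $R_{ad}+R_{bd}+R_{cd}+\Psi(a,b,c)\leq n_{Ra}$, and in addition the extra conditions (E1) $\max\{R_{wu}+R_{uv}+R_{vw},\ R_{uw}+R_{wv}+R_{vu}\}+R_{wt}+R_{ut}+R_{vt}\leq n_{uR}$; (E2) $\max\{R_{bc}+R_{cd}+R_{db},\ R_{cb}+R_{bd}+R_{dc}\}+R_{ab}+R_{ac}+R_{ad}\leq n_{Rb}$; (E3) $R_{ij}+R_{jk}+R_{ki}+\max\{R_{li}+R_{lj}+R_{lk},\ R_{il}+R_{jl}+R_{kl}\}\leq n^*$ for every ordering $(i,j,k,l)$ of $\{1,2,3,4\}$; (E4) $R_{ij}+R_{jk}+R_{kl}+R_{li}+\max(R_{jl},R_{lj})+\max(R_{ik},R_{ki})\leq n^*$ for every ordering $(i,j,k,l)$ of $\{1,2,3,4\}$.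
   Context: Network: four users $1,2,3,4$ and a relay with no messages of its own; users have no direct links and communicate only through the relay. User $i$ sends to user $j$ at rate $R_{ij}$ bits per channel use. Linear deterministic model (Avestimehr–Diggavi–Tse) with non-reciprocal nonnegative integer gains: $n_{iR}$ from user $i$ to the relay, $n_{Ri}$ from the relay to user $i$; with $S$ the $q\times q$ down-shift matrix over $\mathbb{F}_2$, the relay receives $\sum_i S^{q-n_{iR}}x_i$ over $\mathbb{F}_2$ (so user $i$ reaches only the top $n_{iR}$ received levels) and user $i$ receives $S^{q-n_{Ri}}x_R$ (only the top $n_{Ri}$ relay levels). Simple Ordering Scheme (SOS): in the uplink, each user sends its message bits uncoded on distinct signal levels, ordered so that for each pair of users $i,j$, $\min(R_{ij},R_{ji})$ bits of the message $i\to j$ and the same number of bits of the message $j\to i$ arrive at the relay on the same received levels (so the relay observes their XORs), all other bits arriving on levels not shared with other bits. The relay does not decode individual bits; it reorders the received equations (XORed pairs or single bits) into four segments and broadcasts them: the segment for user $d$ (lowest downlink levels) consists of, for each $k\in\{a,b,c\}$, $\min(R_{dk},R_{kd})$ XORs of bits of $R_{dk}$ and $R_{kd}$, followed by the remaining $\max(R_{dk},R_{kd})-\min(R_{dk},R_{kd})$ single bits of $R_{kd}$ if $R_{kd}>R_{dk}$; the segments for $c$, $b$, $a$ (in increasing level order) are built in the same way from the bits not already included in lower segments. Each user decodes its intended bits from the levels it receives, using its own transmitted bits to strip XORs. The uplink levels are organized analogously into segments for users $w,v,u,t$. "Achieves" means that all messages are correctly decoded at rates $R_{ij}$. *)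

theory Defs
  imports Main
begin

text \<open>Users 1..4. A message bit is a triple (i,j,k): the k-th bit of the message i to j.
 Signal vectors in F_2^q are functions nat => bool (indices 0..q-1, index 0 = top).\<close>

definition Users :: "nat set" where "Users = {1,2,3,4}"

definition Bits :: "(nat \<Rightarrow> nat \<Rightarrow> nat) \<Rightarrow> (nat \<times> nat \<times> nat) set" where
  "Bits R = {(i,j,k). i \<in> Users \<and> j \<in> Users \<and> i \<noteq> j \<and> k < R i j}"

definition src :: "nat \<times> nat \<times> nat \<Rightarrow> nat" where "src x = fst x"
definition dst :: "nat \<times> nat \<times> nat \<Rightarrow> nat" where "dst x = fst (snd x)"

definition shiftS :: "nat \<Rightarrow> (nat \<Rightarrow> bool) \<Rightarrow> nat \<Rightarrow> bool" where
  "shiftS s x k = (s \<le> k \<and> x (k - s))"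

text \<open>Uplink: pos x is the position (signal level) of x_i on which user src x sends bit x, uncoded.\<close>
definition user_tx :: "(nat \<Rightarrow> nat \<Rightarrow> nat) \<Rightarrow> (nat\<times>nat\<times>nat \<Rightarrow> nat) \<Rightarrow> (nat\<times>nat\<times>nat \<Rightarrow> bool)
    \<Rightarrow> nat \<Rightarrow> nat \<Rightarrow> bool" where
  "user_tx R pos m i p = (\<exists>x\<in>Bits R. src x = i \<and> pos x = p \<and> m x)"

text \<open>Relay reception: y_R = sum_i S^(q - n_iR) x_i over F_2 (component l).\<close>
definition relay_rx :: "nat \<Rightarrow> (nat \<Rightarrow> nat) \<Rightarrow> (nat \<Rightarrow> nat \<Rightarrow> nat) \<Rightarrow> (nat\<times>nat\<times>nat \<Rightarrow> nat)
    \<Rightarrow> (nat\<times>nat\<times>nat \<Rightarrow> bool) \<Rightarrow> nat \<Rightarrow> bool" where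
  "relay_rx q nup R pos m l =
     (l < q \<and> odd (card {i \<in> Users. shiftS (q - nup i) (user_tx R pos m i) l}))"

definition rl :: "nat \<Rightarrow> (nat \<Rightarrow> nat) \<Rightarrow> (nat\<times>nat\<times>nat \<Rightarrow> nat) \<Rightarrow> nat\<times>nat\<times>nat \<Rightarrow> nat" where
  "rl q nup pos x = pos x + (q - nup (src x))"

definition Levels :: "nat \<Rightarrow> (nat \<Rightarrow> nat) \<Rightarrow> (nat \<Rightarrow> nat \<Rightarrow> nat) \<Rightarrow> (nat\<times>nat\<times>nat \<Rightarrow> nat) \<Rightarrow> nat set" where
  "Levels q nup R pos = rl q nup pos ` Bits R"

definition rank4 :: "nat \<Rightarrow> nat \<Rightarrow> nat \<Rightarrow> nat \<Rightarrow> nat \<Rightarrow> nat" where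
  "rank4 s1 s2 s3 s4 x = (if x = s4 then 0 else if x = s3 then 1 else if x = s2 then 2 else 3)"

text \<open>Uplink segment of an equation: single bit i->j belongs to sender i's segment,
  XOR of i->j and j->i bits to the segment of the weaker (lower-ranked) user.\<close>
definition ukey :: "nat \<Rightarrow> (nat \<Rightarrow> nat) \<Rightarrow> (nat \<Rightarrow> nat \<Rightarrow> nat) \<Rightarrow> (nat\<times>nat\<times>nat \<Rightarrow> nat)
    \<Rightarrow> (nat \<Rightarrow> nat) \<Rightarrow> nat \<Rightarrow> nat" where
  "ukey q nup R pos urk l = Min {urk (src x) | x. x \<in> Bits R \<and> rl q nup pos x = l}"

text \<open>Downlink segment: single bit i->j belongs to receiver j's segment,
  XOR of i->j and j->i bits to the segment of the weaker (lower-ranked) user.\<close>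
definition dkey :: "nat \<Rightarrow> (nat \<Rightarrow> nat) \<Rightarrow> (nat \<Rightarrow> nat \<Rightarrow> nat) \<Rightarrow> (nat\<times>nat\<times>nat \<Rightarrow> nat)
    \<Rightarrow> (nat \<Rightarrow> nat) \<Rightarrow> nat \<Rightarrow> nat" where
  "dkey q nup R pos drk l = Min {drk (dst x) | x. x \<in> Bits R \<and> rl q nup pos x = l}"

text \<open>Structural requirements of the Simple Ordering Scheme.
  pos: uplink level assignment; tp: relay maps received level l to transmit level tp l.\<close>
definition sos_scheme :: "nat \<Rightarrow> (nat \<Rightarrow> nat) \<Rightarrow> (nat \<Rightarrow> nat \<Rightarrow> nat) \<Rightarrow> (nat \<Rightarrow> nat) \<Rightarrow> (nat \<Rightarrow> nat)
    \<Rightarrow> (nat\<times>nat\<times>nat \<Rightarrow> nat) \<Rightarrow> (nat \<Rightarrow> nat) \<Rightarrow> bool" where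
  "sos_scheme q nup R urk drk pos tp =
    ((\<forall>x\<in>Bits R. pos x < nup (src x)) \<comment> \<open>every bit arrives at the relay\<close>
     \<and> (\<forall>x\<in>Bits R. \<forall>y\<in>Bits R. x \<noteq> y \<and> rl q nup pos x = rl q nup pos y
            \<longrightarrow> src x = dst y \<and> dst x = src y) \<comment> \<open>only opposite bits share levels\<close>
     \<and> (\<forall>i\<in>Users. \<forall>j\<in>Users. i \<noteq> j \<longrightarrow>
          card {l. \<exists>k k'. k < R i j \<and> k' < R j i \<and> rl q nup pos (i,j,k) = l
                          \<and> rl q nup pos (j,i,k') = l} = min (R i j) (R j i))
     \<comment> \<open>uplink segments w,v,u,t occupy contiguous levels, lowest = reachable by all\<close>
     \<and> (\<lambda>l. q - 1 - l) ` Levels q nup R pos = {0..<card (Levels q nup R pos)}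
     \<and> (\<forall>l\<in>Levels q nup R pos. \<forall>l'\<in>Levels q nup R pos.
          ukey q nup R pos urk l < ukey q nup R pos urk l' \<longrightarrow> q - 1 - l < q - 1 - l')
     \<comment> \<open>relay reorders equations into downlink segments d,c,b,a\<close>
     \<and> inj_on tp (Levels q nup R pos)
     \<and> tp ` Levels q nup R pos = {0..<card (Levels q nup R pos)}
     \<and> (\<forall>l\<in>Levels q nup R pos. \<forall>l'\<in>Levels q nup R pos.
          dkey q nup R pos drk l < dkey q nup R pos drk l' \<longrightarrow> tp l < tp l'))"

text \<open>Relay transmit signal x_R and reception y_j = S^(q - n_Rj) x_R.\<close>
definition relay_tx :: "nat \<Rightarrow> (nat \<Rightarrow> nat) \<Rightarrow> (nat \<Rightarrow> nat \<Rightarrow> nat) \<Rightarrow> (nat\<times>nat\<times>nat \<Rightarrow> nat)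
    \<Rightarrow> (nat \<Rightarrow> nat) \<Rightarrow> (nat\<times>nat\<times>nat \<Rightarrow> bool) \<Rightarrow> nat \<Rightarrow> bool" where
  "relay_tx q nup R pos tp m p =
     (\<exists>l\<in>Levels q nup R pos. tp l = p \<and> relay_rx q nup R pos m l)"

definition user_rx :: "nat \<Rightarrow> (nat \<Rightarrow> nat) \<Rightarrow> (nat \<Rightarrow> nat) \<Rightarrow> (nat \<Rightarrow> nat \<Rightarrow> nat) \<Rightarrow> (nat\<times>nat\<times>nat \<Rightarrow> nat)
    \<Rightarrow> (nat \<Rightarrow> nat) \<Rightarrow> (nat\<times>nat\<times>nat \<Rightarrow> bool) \<Rightarrow> nat \<Rightarrow> nat \<Rightarrow> bool" where
  "user_rx q nup ndn R pos tp m j k =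
     (k < q \<and> shiftS (q - ndn j) (relay_tx q nup R pos tp m) k)"

text \<open>SOS decoding of bit x at its receiver j: read the level carrying its equation,
  and strip the XOR with j's own bit on that equation (if any).\<close>
definition sos_decode :: "nat \<Rightarrow> (nat \<Rightarrow> nat) \<Rightarrow> (nat \<Rightarrow> nat) \<Rightarrow> (nat \<Rightarrow> nat \<Rightarrow> nat) \<Rightarrow> (nat\<times>nat\<times>nat \<Rightarrow> nat)
    \<Rightarrow> (nat \<Rightarrow> nat) \<Rightarrow> (nat\<times>nat\<times>nat \<Rightarrow> bool) \<Rightarrow> nat\<times>nat\<times>nat \<Rightarrow> bool" where
  "sos_decode q nup ndn R pos tp m x =
     (let j = dst x; l = rl q nup pos x in
       user_rx q nup ndn R pos tp m j (tp l + (q - ndn j))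
       \<noteq> (\<exists>y\<in>Bits R. src y = j \<and> rl q nup pos y = l \<and> m y))"

definition SOS_achieves :: "nat \<Rightarrow> (nat \<Rightarrow> nat) \<Rightarrow> (nat \<Rightarrow> nat) \<Rightarrow> (nat \<Rightarrow> nat \<Rightarrow> nat)
    \<Rightarrow> nat \<Rightarrow> nat \<Rightarrow> nat \<Rightarrow> nat \<Rightarrow> nat \<Rightarrow> nat \<Rightarrow> nat \<Rightarrow> nat \<Rightarrow> bool" where
  "SOS_achieves q nup ndn R t u v w a b c d =
     (\<exists>pos tp. sos_scheme q nup R (rank4 t u v w) (rank4 a b c d) pos tp
        \<and> (\<forall>m. \<forall>x\<in>Bits R. sos_decode q nup ndn R pos tp m x = m x))"

definition Phi :: "(nat \<Rightarrow> nat \<Rightarrow> nat) \<Rightarrow> nat \<Rightarrow> nat \<Rightarrow> nat \<Rightarrow> nat" where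
  "Phi R p s r = Max {R p s + R p r + max (R s r) (R r s),
                      R s p + R s r + max (R p r) (R r p),
                      R r p + R r s + max (R p s) (R s p)}"

definition Psi :: "(nat \<Rightarrow> nat \<Rightarrow> nat) \<Rightarrow> nat \<Rightarrow> nat \<Rightarrow> nat \<Rightarrow> nat" where
  "Psi R p s r = Max {R s p + R r p + max (R s r) (R r s),
                      R p s + R r s + max (R p r) (R r p),
                      R p r + R s r + max (R p s) (R s p)}"

end

theory Submission
  imports Defs "HOL-Library.Product_Lexorder"
begin

text \<open>The relay cannot separate the bits \<open>i \<rightarrow> j\<close> and \<open>j \<rightarrow> i\<close> that arrive on the same level, so
  what it handles are equations, \<open>max R\<^sub>i\<^sub>j R\<^sub>j\<^sub>i\<close> of them for each pair of users. Sort the equations by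
  the segment of their weakest participant (the sender's rank on the uplink, the receiver's rank
  on the downlink) and stack them from the bottom level upwards. An equation of key \<open>r\<close> then
  lies below the number of equations of key at most \<open>r\<close>, and the rate conditions say exactly
  that this number fits under the gain of every user of rank \<open>r\<close>. For the top segment the
  number is the sum of \<open>max R\<^sub>i\<^sub>j R\<^sub>j\<^sub>i\<close> over all six pairs; orienting every pair towards its larger
  rate gives a tournament on the four users, which has a source (conditions with \<open>\<Phi>\<close>, or E3),
  a sink below a cyclic triangle (E3) or a Hamiltonian cycle (E4). A receiver reads the XOR of
  its bit with the opposite bit of the same equation and strips the latter, which it sent itself.\<close>

section \<open>Equations observed by the relay\<close>

definition Eqns :: "(nat \<Rightarrow> nat \<Rightarrow> nat) \<Rightarrow> (nat \<times> nat \<times> nat) set" where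
  "Eqns R = {(i,j,k). i \<in> Users \<and> j \<in> Users \<and> i < j \<and> k < max (R i j) (R j i)}"

text \<open>Bit \<open>(i, j, k)\<close> shares its relay level with bit \<open>(j, i, k)\<close>; both are named by the equation
  \<open>(min i j, max i j, k)\<close>.\<close>
definition eqn_of :: "nat \<times> nat \<times> nat \<Rightarrow> nat \<times> nat \<times> nat" where
  "eqn_of x = (min (src x) (dst x), max (src x) (dst x), snd (snd x))"

definition eqn_key :: "(nat \<Rightarrow> nat \<Rightarrow> nat) \<Rightarrow> (nat \<Rightarrow> nat \<Rightarrow> nat) \<Rightarrow> nat \<times> nat \<times> nat \<Rightarrow> nat" where
  "eqn_key R H e = Min ((\<lambda>x. H (src x) (dst x)) ` {x\<in>Bits R. eqn_of x = e})"

definition pairs_sum :: "(nat \<Rightarrow> nat \<Rightarrow> nat) \<Rightarrow> nat \<Rightarrow> nat \<Rightarrow> nat \<Rightarrow> nat \<Rightarrow> nat" where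
  "pairs_sum g t u v w = g t u + g t v + g t w + g u v + g u w + g v w"

definition load_below :: "(nat \<Rightarrow> nat \<Rightarrow> nat) \<Rightarrow> (nat \<Rightarrow> nat \<Rightarrow> nat) \<Rightarrow> nat \<Rightarrow> nat \<Rightarrow> nat \<Rightarrow> nat" where
  "load_below R H r i j = max (if H i j \<le> r then R i j else 0) (if H j i \<le> r then R j i else 0)"

lemma Bits_Sigma: "Bits R = (SIGMA i:Users. SIGMA j:Users - {i}. {..<R i j})"
  by (auto simp: Bits_def)

lemma finite_Bits: "finite (Bits R)"
  by (simp add: Bits_Sigma Users_def)

lemma Eqns_Sigma: "Eqns R = (SIGMA i:Users. SIGMA j:{j\<in>Users. i < j}. {..<max (R i j) (R j i)})"
  by (auto simp: Eqns_def)

lemma finite_Eqns: "finite (Eqns R)"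
  by (simp add: Eqns_Sigma Users_def)

lemma Bits_D:
  assumes "x \<in> Bits R"
  shows "src x \<in> Users" "dst x \<in> Users" "src x \<noteq> dst x"
  using assms by (auto simp: Bits_def src_def dst_def)

lemma eqn_of_swap: "eqn_of (j, i, k) = eqn_of (i, j, k)"
  by (simp add: eqn_of_def src_def dst_def min.commute max.commute)

lemma image_eqn_of_Bits: "eqn_of ` Bits R = Eqns R"
proof
  show "eqn_of ` Bits R \<subseteq> Eqns R"
    by (auto simp: Bits_def Eqns_def eqn_of_def src_def dst_def min_def max_def)
  show "Eqns R \<subseteq> eqn_of ` Bits R"
  proof
    fix e assume "e \<in> Eqns R"
    then obtain i j k where e: "e = (i,j,k)" "i \<in> Users" "j \<in> Users" "i < j"
      and "k < max (R i j) (R j i)"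
      by (auto simp: Eqns_def)
    then consider "(i,j,k) \<in> Bits R" | "(j,i,k) \<in> Bits R"
      by (auto simp: Bits_def less_max_iff_disj)
    moreover have "eqn_of (i,j,k) = e" using e by (simp add: eqn_of_def src_def dst_def)
    ultimately show "e \<in> eqn_of ` Bits R"
      by cases (metis eqn_of_swap image_eqI)+
  qed
qed

lemma eqn_of_in_Eqns: "x \<in> Bits R \<Longrightarrow> eqn_of x \<in> Eqns R"
  using image_eqn_of_Bits by blast

lemma eqn_of_eq_iff:
  assumes x: "(a,b,k) \<in> Bits R" and y: "y \<in> Bits R"
  shows "eqn_of y = eqn_of (a,b,k) \<longleftrightarrow> y = (a,b,k) \<or> (y = (b,a,k) \<and> k < R b a)"
proof -
  obtain c d k' where yy: "y = (c,d,k')" by (cases y)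
  have "a \<noteq> b" "c \<noteq> d" "k' < R c d" using x y yy by (auto simp: Bits_def)
  then show ?thesis
    unfolding yy by (auto simp: eqn_of_def src_def dst_def min_def max_def split: if_splits)
qed

lemma eqn_of_eq_iff_ordered:
  "i < j \<Longrightarrow> eqn_of (a,b,c) = (i,j,k) \<longleftrightarrow> c = k \<and> ((a,b) = (i,j) \<or> (a,b) = (j,i))"
  by (auto simp: eqn_of_def src_def dst_def min_def max_def)

lemma eqn_key_le_iff:
  assumes "(i,j,k) \<in> Eqns R"
  shows "eqn_key R H (i,j,k) \<le> r \<longleftrightarrow> (k < R i j \<and> H i j \<le> r) \<or> (k < R j i \<and> H j i \<le> r)"
proof -
  have ij: "i \<in> Users" "j \<in> Users" "i < j"
    using assms by (auto simp: Eqns_def)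
  have bits: "{x\<in>Bits R. eqn_of x = (i,j,k)} = {x. (x = (i,j,k) \<and> k < R i j) \<or> (x = (j,i,k) \<and> k < R j i)}"
  proof (intro set_eqI)
    fix x :: "nat \<times> nat \<times> nat"
    obtain a b c where x: "x = (a,b,c)" by (cases x)
    show "x \<in> {x\<in>Bits R. eqn_of x = (i,j,k)} \<longleftrightarrow> x \<in> {x. (x = (i,j,k) \<and> k < R i j) \<or> (x = (j,i,k) \<and> k < R j i)}"
      using ij unfolding x by (auto simp: Bits_def eqn_of_eq_iff_ordered[OF ij(3)])
  qed
  have "(i,j,k) \<in> eqn_of ` Bits R"
    using assms by (simp add: image_eqn_of_Bits)
  then have "{x\<in>Bits R. eqn_of x = (i,j,k)} \<noteq> {}"
    by force
  then have "eqn_key R H (i,j,k) \<le> r \<longleftrightarrow> (\<exists>x\<in>{x\<in>Bits R. eqn_of x = (i,j,k)}. H (src x) (dst x) \<le> r)"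
    unfolding eqn_key_def using finite_Bits[of R] by (simp add: Min_le_iff)
  then show ?thesis
    unfolding bits by (auto simp: src_def dst_def)
qed

lemma eqn_key_le:
  assumes "x \<in> Bits R"
  shows "eqn_key R H (eqn_of x) \<le> H (src x) (dst x)"
  unfolding eqn_key_def using assms finite_Bits[of R] by (intro Min_le) auto

lemma double_pairs_sum:
  assumes "distinct [t, u, v, w]" and "\<And>i j. g i j = g j i"
  shows "2 * pairs_sum g t u v w = (\<Sum>i\<in>{t,u,v,w}. \<Sum>j\<in>{t,u,v,w} - {i}. g i j)"
proof -
  have "{t,u,v,w} - {t} = {u,v,w}" "{t,u,v,w} - {u} = {t,v,w}"
    "{t,u,v,w} - {v} = {t,u,w}" "{t,u,v,w} - {w} = {t,u,v}"
    using assms(1) by auto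
  then show ?thesis
    using assms by (simp add: pairs_sum_def)
qed

lemma distinct4_set_eq:
  assumes "distinct [t, u, v, w]" "{t,u,v,w} = {t',u',v',w'}"
  shows "distinct [t', u', v', w']"
proof -
  have "card (set [t',u',v',w']) = 4"
    using assms distinct_card[OF assms(1)] by simp
  then show ?thesis
    by (intro card_distinct) simp
qed

lemma pairs_sum_set_eq:
  assumes "distinct [t, u, v, w]" "{t,u,v,w} = {t',u',v',w'}" and "\<And>i j. g i j = g j i"
  shows "pairs_sum g t u v w = pairs_sum g t' u' v' w'"
proof -
  from double_pairs_sum[where g=g, OF distinct4_set_eq[OF assms(1,2)] assms(3)]
    double_pairs_sum[where g=g, OF assms(1,3), unfolded assms(2)]
  show ?thesis by linarith
qed

lemma card_eqn_key_le:
  assumes "distinct [t, u, v, w]" "{t,u,v,w} = Users"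
  shows "card {e\<in>Eqns R. eqn_key R H e \<le> r} = pairs_sum (load_below R H r) t u v w"
proof -
  have "{e\<in>Eqns R. eqn_key R H e \<le> r} = (SIGMA i:Users. SIGMA j:{j\<in>Users. i < j}. {..<load_below R H r i j})"
  proof (intro set_eqI)
    fix e :: "nat \<times> nat \<times> nat"
    obtain i j k where e: "e = (i,j,k)" by (cases e)
    show "e \<in> {e\<in>Eqns R. eqn_key R H e \<le> r} \<longleftrightarrow> e \<in> (SIGMA i:Users. SIGMA j:{j\<in>Users. i < j}. {..<load_below R H r i j})"
    proof (cases "(i,j,k) \<in> Eqns R")
      case True
      then show ?thesis unfolding e using eqn_key_le_iff[OF True, of H r] by (auto simp: Eqns_def load_below_def)
    next
      case False
      have "k < load_below R H r i j \<Longrightarrow> k < max (R i j) (R j i)"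
        by (auto simp: load_below_def split: if_splits)
      with False show ?thesis unfolding e by (auto simp: Eqns_def)
    qed
  qed
  then have "card {e\<in>Eqns R. eqn_key R H e \<le> r} = (\<Sum>i\<in>Users. \<Sum>j\<in>{j\<in>Users. i < j}. load_below R H r i j)"
    by (simp add: card_SigmaI Users_def)
  also have "\<dots> = pairs_sum (load_below R H r) 1 2 3 4"
  proof -
    have above: "{j\<in>Users. 1 < j} = {2,3,4}" "{j\<in>Users. 2 < j} = {3,4}" "{j\<in>Users. 3 < j} = {4}"
      "{j\<in>Users. 4 < j} = {}"
      by (auto simp: Users_def)
    have sum_Users: "(\<Sum>i\<in>Users. f i) = f 1 + f 2 + f 3 + f 4" for f :: "nat \<Rightarrow> nat"
      by (simp add: Users_def)
    show ?thesis unfolding sum_Users above by (simp add: pairs_sum_def)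
  qed
  also have "\<dots> = pairs_sum (load_below R H r) t u v w"
  proof (rule pairs_sum_set_eq)
    show "{1, 2, 3, 4} = {t, u, v, w}" using assms(2) by (simp add: Users_def)
    show "load_below R H r i j = load_below R H r j i" for i j
      by (simp add: load_below_def max.commute)
  qed simp
  finally show ?thesis .
qed

section \<open>Capacity bounds from the rate conditions\<close>

definition pair_load :: "(nat \<Rightarrow> nat \<Rightarrow> nat) \<Rightarrow> nat \<Rightarrow> nat \<Rightarrow> nat" where
  "pair_load R i j = max (R i j) (R j i)"

lemma pair_load_commute: "pair_load R i j = pair_load R j i"
  by (simp add: pair_load_def max.commute)

lemma triangle_load_le:
  "pair_load R q r + pair_load R q s + pair_load R r s
     \<le> max (Phi R q r s) (max (R q r + R r s + R s q) (R q s + R s r + R r q))"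
  unfolding pair_load_def Phi_def by (simp add: max_def)

lemma tournament4_cases:
  fixes dom :: "'a \<Rightarrow> 'a \<Rightarrow> bool"
  assumes total: "\<And>x y. dom x y \<or> dom y x"
  obtains (source) p q r s where "(p,q,r,s) \<in> {(t,u,v,w), (u,t,v,w), (v,t,u,w), (w,t,u,v)}"
      "dom p q" "dom p r" "dom p s"
    | (sink) i j k l where "{i,j,k,l} = {t,u,v,w}"
      "dom i j" "dom j k" "dom k i" "dom i l" "dom j l" "dom k l"
    | (cycle) i j k l where "{i,j,k,l} = {t,u,v,w}" "dom i j" "dom j k" "dom k l" "dom l i"
proof -
  have "dom t u \<or> dom u t" "dom t v \<or> dom v t" "dom t w \<or> dom w t"
    "dom u v \<or> dom v u" "dom u w \<or> dom w u" "dom v w \<or> dom w v"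
    using total by blast+
  then show thesis
    by (elim disjE) (blast intro: that)+
qed

lemma all_pairs_load_le:
  fixes R :: "nat \<Rightarrow> nat \<Rightarrow> nat"
  assumes distinct: "distinct [t, u, v, w]"
    and Phi_bound: "R t u + R t v + R t w + Phi R u v w \<le> N"
      "R u t + R u v + R u w + Phi R t v w \<le> N"
      "R v t + R v u + R v w + Phi R t u w \<le> N"
      "R w t + R w u + R w v + Phi R t u v \<le> N"
    and E3: "\<forall>i j k l. {i, j, k, l} = {t, u, v, w} \<longrightarrow>
               R i j + R j k + R k i + max (R l i + R l j + R l k) (R i l + R j l + R k l) \<le> M"
    and E4: "\<forall>i j k l. {i, j, k, l} = {t, u, v, w} \<longrightarrow>
               R i j + R j k + R k l + R l i + max (R j l) (R l j) + max (R i k) (R k i) \<le> M"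
    and "M \<le> N"
  shows "pairs_sum (pair_load R) t u v w \<le> N"
proof -
  have perm: "pairs_sum (pair_load R) t u v w = pairs_sum (pair_load R) i j k l"
    if "{i,j,k,l} = {t,u,v,w}" for i j k l
    using that by (intro pairs_sum_set_eq[OF distinct]) (auto simp: pair_load_commute)
  have load: "pair_load R x y = R x y" if "R y x \<le> R x y" for x y
    using that by (simp add: pair_load_def)
  have "R y x \<le> R x y \<or> R x y \<le> R y x" for x y
    by linarith
  then show ?thesis
  proof (cases rule: tournament4_cases[where dom = "\<lambda>x y. R y x \<le> R x y" and t = t and u = u and v = v and w = w])
    case (source p q r s)
    then have set: "{q,r,s,p} = {t,u,v,w}" "{q,s,r,p} = {t,u,v,w}"
      by auto
    have "R p q + R p r + R p s + Phi R q r s \<le> N"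
      using source(1) Phi_bound by auto
    moreover have "pairs_sum (pair_load R) t u v w
        = R p q + R p r + R p s + (pair_load R q r + pair_load R q s + pair_load R r s)"
      using perm[OF set(1)] source by (simp add: pairs_sum_def load pair_load_commute)
    ultimately show ?thesis
      using triangle_load_le[of R q r s] E3[rule_format, OF set(1)] E3[rule_format, OF set(2)] \<open>M \<le> N\<close>
      by (simp add: max_def split: if_splits)
  next
    case (sink i j k l)
    then have "pair_load R i k = R k i"
      by (simp add: pair_load_def)
    with sink show ?thesis
      using perm[OF sink(1)] E3[rule_format, OF sink(1)] \<open>M \<le> N\<close>
      by (simp add: pairs_sum_def load pair_load_commute max_def)
  next
    case (cycle i j k l)
    then have "pair_load R i l = R l i"
      by (simp add: pair_load_def)
    with cycle show ?thesis
      using perm[OF cycle(1)] E4[rule_format, OF cycle(1)] \<open>M \<le> N\<close>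
      by (simp add: pairs_sum_def load pair_load_def)
  qed
qed

lemma Psi_eq_Phi_transpose: "Psi R p q r = Phi (\<lambda>i j. R j i) p q r"
  by (simp add: Psi_def Phi_def max.commute)

lemma ranked_loads_fit:
  fixes R :: "nat \<Rightarrow> nat \<Rightarrow> nat" and n :: "nat \<Rightarrow> nat" and t u v w x :: nat
  defines "rk \<equiv> rank4 t u v w"
  assumes distinct: "distinct [t, u, v, w]"
    and c1: "R w t + R w u + R w v \<le> n w"
    and c3: "R w t + R w u + R v t + R v u + max (R v w) (R w v) \<le> n v"
    and c5: "R u t + R v t + R w t + Phi R u v w \<le> n u"
    and E1: "max (R w u + R u v + R v w) (R u w + R w v + R v u) + R w t + R u t + R v t \<le> n u"
    and Phi_bound: "R t u + R t v + R t w + Phi R u v w \<le> n t"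
      "R u t + R u v + R u w + Phi R t v w \<le> n t"
      "R v t + R v u + R v w + Phi R t u w \<le> n t"
      "R w t + R w u + R w v + Phi R t u v \<le> n t"
    and E3: "\<forall>i j k l. {i, j, k, l} = {t, u, v, w} \<longrightarrow>
               R i j + R j k + R k i + max (R l i + R l j + R l k) (R i l + R j l + R k l) \<le> M"
    and E4: "\<forall>i j k l. {i, j, k, l} = {t, u, v, w} \<longrightarrow>
               R i j + R j k + R k l + R l i + max (R j l) (R l j) + max (R i k) (R k i) \<le> M"
    and M_le: "M \<le> n t"
    and x: "x \<in> {t, u, v, w}"
  shows "pairs_sum (load_below R (\<lambda>i j. rk i) (rk x)) t u v w \<le> n x"
proof -
  have rk: "rk w = 0" "rk v = 1" "rk u = 2" "rk t = 3"
    using distinct by (auto simp: rk_def rank4_def)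
  from x consider "x = w" | "x = v" | "x = u" | "x = t"
    by auto
  then show ?thesis
  proof cases
    case 1
    then show ?thesis using c1 by (simp add: rk pairs_sum_def load_below_def)
  next
    case 2
    then show ?thesis using c3 by (simp add: rk pairs_sum_def load_below_def max.commute)
  next
    case 3
    then have "pairs_sum (load_below R (\<lambda>i j. rk i) (rk x)) t u v w
        = R u t + R v t + R w t + (pair_load R u v + pair_load R u w + pair_load R v w)"
      by (simp add: rk pairs_sum_def load_below_def pair_load_def)
    then show ?thesis
      using 3 c5 E1 triangle_load_le[of R u v w] by (simp add: max_def split: if_splits)
  next
    case 4
    have "rk i \<le> 3" for i
      by (simp add: rk_def rank4_def)
    then have "load_below R (\<lambda>i j. rk i) (rk x) = pair_load R"
      using 4 by (simp add: rk load_below_def pair_load_def fun_eq_iff)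
    then have "pairs_sum (load_below R (\<lambda>i j. rk i) (rk x)) t u v w = pairs_sum (pair_load R) t u v w"
      by (simp add: pairs_sum_def)
    then show ?thesis
      using 4 all_pairs_load_le[OF distinct Phi_bound E3 E4 M_le] by simp
  qed
qed

lemma ranked_loads_fit_downlink:
  fixes R :: "nat \<Rightarrow> nat \<Rightarrow> nat" and n :: "nat \<Rightarrow> nat" and a b c d x :: nat
  defines "rk \<equiv> rank4 a b c d"
  assumes distinct: "distinct [a, b, c, d]"
    and c2: "R a d + R b d + R c d \<le> n d"
    and c4: "R a d + R b d + R a c + R b c + max (R c d) (R d c) \<le> n c"
    and c10: "R a b + R a c + R a d + Psi R b c d \<le> n b"
    and E2: "max (R b c + R c d + R d b) (R c b + R b d + R d c) + R a b + R a c + R a d \<le> n b"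
    and Psi_bound: "R b a + R c a + R d a + Psi R b c d \<le> n a"
      "R a b + R c b + R d b + Psi R a c d \<le> n a"
      "R a c + R b c + R d c + Psi R a b d \<le> n a"
      "R a d + R b d + R c d + Psi R a b c \<le> n a"
    and E3: "\<forall>i j k l. {i, j, k, l} = {a, b, c, d} \<longrightarrow>
               R i j + R j k + R k i + max (R l i + R l j + R l k) (R i l + R j l + R k l) \<le> M"
    and E4: "\<forall>i j k l. {i, j, k, l} = {a, b, c, d} \<longrightarrow>
               R i j + R j k + R k l + R l i + max (R j l) (R l j) + max (R i k) (R k i) \<le> M"
    and M_le: "M \<le> n a"
    and x: "x \<in> {a, b, c, d}"
  shows "pairs_sum (load_below R (\<lambda>i j. rk j) (rk x)) a b c d \<le> n x"
proof -
  \<comment> \<open>the downlink conditions are the uplink conditions of the transposed rates\<close>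
  define RT where "RT = (\<lambda>i j. R j i)"
  have "load_below R (\<lambda>i j. rk j) r = load_below RT (\<lambda>i j. rk i) r" for r
    by (simp add: load_below_def RT_def fun_eq_iff max.commute)
  moreover have "pairs_sum (load_below RT (\<lambda>i j. rk i) (rk x)) a b c d \<le> n x"
    unfolding rk_def
  proof (rule ranked_loads_fit[where R = RT and n = n and t = a and u = b and v = c and w = d,
        OF distinct _ _ _ _ _ _ _ _ _ _ M_le x])
    show "\<forall>i j k l. {i, j, k, l} = {a, b, c, d} \<longrightarrow>
        RT i j + RT j k + RT k i + max (RT l i + RT l j + RT l k) (RT i l + RT j l + RT k l) \<le> M"
    proof (intro allI impI)
      fix i j k l assume "{i, j, k, l} = {a, b, c, d}"
      then have "{i, k, j, l} = {a, b, c, d}" by (simp add: insert_commute)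
      from E3[rule_format, OF this]
      show "RT i j + RT j k + RT k i + max (RT l i + RT l j + RT l k) (RT i l + RT j l + RT k l) \<le> M"
        unfolding RT_def by (simp add: ac_simps max.commute)
    qed
    show "\<forall>i j k l. {i, j, k, l} = {a, b, c, d} \<longrightarrow>
        RT i j + RT j k + RT k l + RT l i + max (RT j l) (RT l j) + max (RT i k) (RT k i) \<le> M"
    proof (intro allI impI)
      fix i j k l assume "{i, j, k, l} = {a, b, c, d}"
      then have "{i, l, k, j} = {a, b, c, d}" by (simp add: insert_commute)
      from E4[rule_format, OF this]
      show "RT i j + RT j k + RT k l + RT l i + max (RT j l) (RT l j) + max (RT i k) (RT k i) \<le> M"
        unfolding RT_def by (simp add: ac_simps max.commute)
    qed
    show "RT d a + RT d b + RT d c \<le> n d"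
      using c2 by (simp add: RT_def)
    show "RT d a + RT d b + RT c a + RT c b + max (RT c d) (RT d c) \<le> n c"
      using c4 by (simp add: RT_def max.commute)
    show "RT b a + RT c a + RT d a + Phi RT b c d \<le> n b"
      using c10 by (simp add: RT_def Psi_eq_Phi_transpose)
    show "max (RT d b + RT b c + RT c d) (RT b d + RT d c + RT c b) + RT d a + RT b a + RT c a \<le> n b"
      using E2 by (simp add: RT_def ac_simps max.commute)
    show "RT a b + RT a c + RT a d + Phi RT b c d \<le> n a"
      "RT b a + RT b c + RT b d + Phi RT a c d \<le> n a"
      "RT c a + RT c b + RT c d + Phi RT a b d \<le> n a"
      "RT d a + RT d b + RT d c + Phi RT a b c \<le> n a"
      using Psi_bound by (simp_all add: RT_def Psi_eq_Phi_transpose)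
  qed
  ultimately show ?thesis by simp
qed

section \<open>Realising the scheme\<close>

lemma ex_key_sorted_enumeration:
  fixes E :: "'a::linorder set" and \<kappa> :: "'a \<Rightarrow> 'b::linorder"
  assumes fin: "finite E"
  obtains f where "bij_betw f E {0..<card E}"
    and "\<And>e e'. e \<in> E \<Longrightarrow> e' \<in> E \<Longrightarrow> \<kappa> e < \<kappa> e' \<Longrightarrow> f e < f e'"
    and "\<And>e. e \<in> E \<Longrightarrow> f e < card {e'\<in>E. \<kappa> e' \<le> \<kappa> e}"
proof -
  define before where "before e' e \<longleftrightarrow> \<kappa> e' < \<kappa> e \<or> (\<kappa> e' = \<kappa> e \<and> e' < e)" for e' e
  define f where "f e = card {e'\<in>E. before e' e}" for e
  have mono: "f e < f e'" if "e \<in> E" "e' \<in> E" "before e e'" for e e'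
  proof -
    have "{x\<in>E. before x e} \<subset> {x\<in>E. before x e'}"
      using that unfolding before_def by auto
    then show ?thesis unfolding f_def using fin by (simp add: psubset_card_mono)
  qed
  have inj: "inj_on f E"
  proof (rule inj_onI, rule ccontr)
    fix e e' assume "e \<in> E" "e' \<in> E" "f e = f e'" "e \<noteq> e'"
    then show False using mono[of e e'] mono[of e' e] unfolding before_def by force
  qed
  have below: "f e < card {e'\<in>E. \<kappa> e' \<le> \<kappa> e}" if "e \<in> E" for e
  proof -
    have "{e'\<in>E. before e' e} \<subset> {e'\<in>E. \<kappa> e' \<le> \<kappa> e}"
      using that unfolding before_def by auto
    then show ?thesis unfolding f_def using fin by (simp add: psubset_card_mono)
  qed
  have "f e < card E" if "e \<in> E" for e
    using below[OF that] card_mono[OF fin, of "{e'\<in>E. \<kappa> e' \<le> \<kappa> e}"] by auto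
  then have "f ` E \<subseteq> {0..<card E}" by auto
  moreover have "card (f ` E) = card {0..<card E}"
    using card_image[OF inj] by simp
  ultimately have "bij_betw f E {0..<card E}"
    using inj by (simp add: bij_betw_def card_subset_eq)
  then show thesis
    using that mono below unfolding before_def by blast
qed

definition fitting_enumeration ::
    "(nat \<Rightarrow> nat \<Rightarrow> nat) \<Rightarrow> (nat \<Rightarrow> nat \<Rightarrow> nat) \<Rightarrow> (nat \<Rightarrow> nat \<Rightarrow> nat) \<Rightarrow> (nat \<times> nat \<times> nat \<Rightarrow> nat) \<Rightarrow> bool"
  where "fitting_enumeration R H D f \<longleftrightarrow>
    bij_betw f (Eqns R) {0..<card (Eqns R)}
    \<and> (\<forall>e\<in>Eqns R. \<forall>e'\<in>Eqns R. eqn_key R H e < eqn_key R H e' \<longrightarrow> f e < f e')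
    \<and> (\<forall>x\<in>Bits R. f (eqn_of x) < D (src x) (dst x))"

lemma ex_fitting_enumeration:
  assumes fits: "\<And>x. x \<in> Bits R \<Longrightarrow> card {e\<in>Eqns R. eqn_key R H e \<le> H (src x) (dst x)} \<le> D (src x) (dst x)"
  shows "\<exists>f. fitting_enumeration R H D f"
proof -
  obtain f where bij: "bij_betw f (Eqns R) {0..<card (Eqns R)}"
    and mono: "\<And>e e'. e \<in> Eqns R \<Longrightarrow> e' \<in> Eqns R \<Longrightarrow> eqn_key R H e < eqn_key R H e' \<Longrightarrow> f e < f e'"
    and below: "\<And>e. e \<in> Eqns R \<Longrightarrow> f e < card {e'\<in>Eqns R. eqn_key R H e' \<le> eqn_key R H e}"
    using ex_key_sorted_enumeration[OF finite_Eqns[of R], where \<kappa> = "eqn_key R H"] by blast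
  have "f (eqn_of x) < D (src x) (dst x)" if x: "x \<in> Bits R" for x
  proof -
    have "f (eqn_of x) < card {e'\<in>Eqns R. eqn_key R H e' \<le> eqn_key R H (eqn_of x)}"
      using below eqn_of_in_Eqns[OF x] .
    also have "\<dots> \<le> card {e\<in>Eqns R. eqn_key R H e \<le> H (src x) (dst x)}"
      using eqn_key_le[OF x, of H] finite_Eqns[of R] by (intro card_mono) auto
    also have "\<dots> \<le> D (src x) (dst x)"
      using fits[OF x] .
    finally show ?thesis .
  qed
  with bij mono show ?thesis
    unfolding fitting_enumeration_def by blast
qed

lemma eqn_of_eq_opposite:
  assumes "x \<in> Bits R" "y \<in> Bits R" "x \<noteq> y" "eqn_of x = eqn_of y"
  shows "src x = dst y \<and> dst x = src y"
  using assms eqn_of_eq_iff[of "src x" "dst x" "snd (snd x)" R y]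
  by (cases x) (auto simp: src_def dst_def)

lemma shiftS_user_tx_iff:
  "shiftS (q - nup i) (user_tx R pos m i) l \<longleftrightarrow> (\<exists>y\<in>Bits R. src y = i \<and> rl q nup pos y = l \<and> m y)"
  unfolding shiftS_def user_tx_def rl_def by auto

lemma user_rx_relay_level:
  assumes "inj_on tp (Levels q nup R pos)" "l \<in> Levels q nup R pos" "tp l < ndn j" "ndn j \<le> q"
  shows "user_rx q nup ndn R pos tp m j (tp l + (q - ndn j)) \<longleftrightarrow> relay_rx q nup R pos m l"
  using assms unfolding user_rx_def shiftS_def relay_tx_def by (auto simp: inj_on_eq_iff)

locale sos_enumeration =
  fixes q :: nat and nup ndn :: "nat \<Rightarrow> nat" and R :: "nat \<Rightarrow> nat \<Rightarrow> nat"
    and urk drk :: "nat \<Rightarrow> nat" and fu fd :: "nat \<times> nat \<times> nat \<Rightarrow> nat"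
  assumes gains_le: "\<forall>i\<in>Users. nup i \<le> q \<and> ndn i \<le> q"
    and uplink: "fitting_enumeration R (\<lambda>i j. urk i) (\<lambda>i j. nup i) fu"
    and downlink: "fitting_enumeration R (\<lambda>i j. drk j) (\<lambda>i j. ndn j) fd"
begin

lemma bij_fu: "bij_betw fu (Eqns R) {0..<card (Eqns R)}"
  and mono_fu: "e \<in> Eqns R \<Longrightarrow> e' \<in> Eqns R \<Longrightarrow> eqn_key R (\<lambda>i j. urk i) e < eqn_key R (\<lambda>i j. urk i) e' \<Longrightarrow> fu e < fu e'"
  and fu_reach: "x \<in> Bits R \<Longrightarrow> fu (eqn_of x) < nup (src x)"
  using uplink unfolding fitting_enumeration_def by blast+

lemma bij_fd: "bij_betw fd (Eqns R) {0..<card (Eqns R)}"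
  and mono_fd: "e \<in> Eqns R \<Longrightarrow> e' \<in> Eqns R \<Longrightarrow> eqn_key R (\<lambda>i j. drk j) e < eqn_key R (\<lambda>i j. drk j) e' \<Longrightarrow> fd e < fd e'"
  and fd_reach: "x \<in> Bits R \<Longrightarrow> fd (eqn_of x) < ndn (dst x)"
  using downlink unfolding fitting_enumeration_def by blast+

text \<open>\<open>fu e\<close> counts from the bottom of the relay's received signal, whose top level is \<open>0\<close>;
  \<open>fd e\<close> is the transmit level of \<open>e\<close> in the relay's downlink signal.\<close>
definition lev :: "nat \<times> nat \<times> nat \<Rightarrow> nat" where
  "lev e = q - 1 - fu e"

definition pos :: "nat \<times> nat \<times> nat \<Rightarrow> nat" where
  "pos x = lev (eqn_of x) - (q - nup (src x))"

definition tp :: "nat \<Rightarrow> nat" where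
  "tp l = fd (the_inv_into (Eqns R) lev l)"

lemma fu_less_q: "e \<in> Eqns R \<Longrightarrow> fu e < q"
  using fu_reach gains_le Bits_D(1) image_eqn_of_Bits by (metis imageE order_less_le_trans)

lemma inj_lev: "inj_on lev (Eqns R)"
proof (rule inj_onI)
  fix e e' assume "e \<in> Eqns R" "e' \<in> Eqns R" "lev e = lev e'"
  then have "fu e = fu e'"
    using fu_less_q[of e] fu_less_q[of e'] unfolding lev_def by linarith
  then show "e = e'"
    using bij_fu \<open>e \<in> Eqns R\<close> \<open>e' \<in> Eqns R\<close> by (auto simp: bij_betw_def inj_on_eq_iff)
qed

lemma rl_pos: "x \<in> Bits R \<Longrightarrow> rl q nup pos x = lev (eqn_of x)"
  using fu_reach[of x] gains_le Bits_D(1)[of x R] unfolding rl_def pos_def lev_def by auto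

lemma rl_pos_eq_iff:
  "x \<in> Bits R \<Longrightarrow> y \<in> Bits R \<Longrightarrow> rl q nup pos x = rl q nup pos y \<longleftrightarrow> eqn_of x = eqn_of y"
  using inj_lev eqn_of_in_Eqns by (auto simp: rl_pos inj_on_eq_iff)

lemma Levels_pos: "Levels q nup R pos = lev ` Eqns R"
  unfolding Levels_def image_eqn_of_Bits[symmetric] image_image by (simp add: rl_pos cong: image_cong)

lemma tp_lev: "e \<in> Eqns R \<Longrightarrow> tp (lev e) = fd e"
  unfolding tp_def using the_inv_into_f_f[OF inj_lev] by simp

lemma inj_tp: "inj_on tp (Levels q nup R pos)"
  using bij_fd unfolding Levels_pos
  by (auto intro!: inj_onI simp: tp_lev bij_betw_def inj_on_eq_iff)

lemma Min_level_key:
  assumes "e \<in> Eqns R"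
  shows "Min {H (src x) (dst x) | x. x \<in> Bits R \<and> rl q nup pos x = lev e} = eqn_key R H e"
proof -
  have "rl q nup pos x = lev e \<longleftrightarrow> eqn_of x = e" if "x \<in> Bits R" for x
    using that assms inj_lev eqn_of_in_Eqns by (auto simp: rl_pos inj_on_eq_iff)
  then have "{H (src x) (dst x) | x. x \<in> Bits R \<and> rl q nup pos x = lev e}
      = (\<lambda>x. H (src x) (dst x)) ` {x\<in>Bits R. eqn_of x = e}"
    by blast
  then show ?thesis by (simp add: eqn_key_def)
qed

lemma card_shared_levels:
  assumes ij: "i \<in> Users" "j \<in> Users" "i \<noteq> j"
  shows "card {l. \<exists>k k'. k < R i j \<and> k' < R j i \<and> rl q nup pos (i,j,k) = l
                     \<and> rl q nup pos (j,i,k') = l} = min (R i j) (R j i)"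
proof -
  have bits: "(i,j,k) \<in> Bits R \<longleftrightarrow> k < R i j" "(j,i,k) \<in> Bits R \<longleftrightarrow> k < R j i" for k
    using ij by (auto simp: Bits_def)
  have eqn: "eqn_of (i,j,k) = eqn_of (j,i,k') \<longleftrightarrow> k = k'" "eqn_of (i,j,k) = eqn_of (i,j,k') \<longleftrightarrow> k = k'" for k k'
    by (auto simp: eqn_of_def src_def dst_def)
  have shared: "rl q nup pos (i,j,k) = rl q nup pos (j,i,k') \<longleftrightarrow> k = k'" if "k < R i j" "k' < R j i" for k k'
    using that by (simp add: rl_pos_eq_iff bits eqn)
  have "{l. \<exists>k k'. k < R i j \<and> k' < R j i \<and> rl q nup pos (i,j,k) = l \<and> rl q nup pos (j,i,k') = l}
      = (\<lambda>k. rl q nup pos (i,j,k)) ` {..<min (R i j) (R j i)}"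
  proof
    show "{l. \<exists>k k'. k < R i j \<and> k' < R j i \<and> rl q nup pos (i,j,k) = l \<and> rl q nup pos (j,i,k') = l}
        \<subseteq> (\<lambda>k. rl q nup pos (i,j,k)) ` {..<min (R i j) (R j i)}"
      using shared by fastforce
    show "(\<lambda>k. rl q nup pos (i,j,k)) ` {..<min (R i j) (R j i)}
        \<subseteq> {l. \<exists>k k'. k < R i j \<and> k' < R j i \<and> rl q nup pos (i,j,k) = l \<and> rl q nup pos (j,i,k') = l}"
      using shared by fastforce
  qed
  moreover have "inj_on (\<lambda>k. rl q nup pos (i,j,k)) {..<min (R i j) (R j i)}"
    by (auto intro!: inj_onI simp: rl_pos_eq_iff bits eqn)
  ultimately show ?thesis
    by (simp add: card_image)
qed

lemma pos_less_gain: "x \<in> Bits R \<Longrightarrow> pos x < nup (src x)"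
  using fu_reach[of x] gains_le Bits_D(1)[of x R] unfolding pos_def lev_def by auto

lemma sos_scheme: "sos_scheme q nup R urk drk pos tp"
proof -
  have top: "q - 1 - lev e = fu e" if "e \<in> Eqns R" for e
    using fu_less_q[OF that] by (simp add: lev_def)
  have card_Levels: "card (Levels q nup R pos) = card (Eqns R)"
    unfolding Levels_pos using inj_lev by (rule card_image)
  have ukey: "ukey q nup R pos urk (lev e) = eqn_key R (\<lambda>i j. urk i) e"
    and dkey: "dkey q nup R pos drk (lev e) = eqn_key R (\<lambda>i j. drk j) e" if "e \<in> Eqns R" for e
    unfolding ukey_def dkey_def
    using Min_level_key[OF that, of "\<lambda>i j. urk i"] Min_level_key[OF that, of "\<lambda>i j. drk j"] by simp_all
  show ?thesis
    unfolding sos_scheme_def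
  proof (intro conjI)
    show "\<forall>x\<in>Bits R. pos x < nup (src x)"
      using pos_less_gain by blast
    show "\<forall>x\<in>Bits R. \<forall>y\<in>Bits R. x \<noteq> y \<and> rl q nup pos x = rl q nup pos y
        \<longrightarrow> src x = dst y \<and> dst x = src y"
      using eqn_of_eq_opposite by (simp add: rl_pos_eq_iff)
    show "\<forall>i\<in>Users. \<forall>j\<in>Users. i \<noteq> j \<longrightarrow>
        card {l. \<exists>k k'. k < R i j \<and> k' < R j i \<and> rl q nup pos (i,j,k) = l
                        \<and> rl q nup pos (j,i,k') = l} = min (R i j) (R j i)"
      using card_shared_levels by blast
    have "(\<lambda>l. q - 1 - l) ` Levels q nup R pos = fu ` Eqns R"
      unfolding Levels_pos image_image by (rule image_cong[OF refl top])
    then show "(\<lambda>l. q - 1 - l) ` Levels q nup R pos = {0..<card (Levels q nup R pos)}"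
      using bij_fu card_Levels by (simp add: bij_betw_def)
    show "\<forall>l\<in>Levels q nup R pos. \<forall>l'\<in>Levels q nup R pos.
        ukey q nup R pos urk l < ukey q nup R pos urk l' \<longrightarrow> q - 1 - l < q - 1 - l'"
      unfolding Levels_pos by (auto simp: ukey top[simplified] mono_fu)
    show "inj_on tp (Levels q nup R pos)"
      by (rule inj_tp)
    have "tp ` Levels q nup R pos = fd ` Eqns R"
      unfolding Levels_pos image_image by (rule image_cong[OF refl tp_lev])
    then show "tp ` Levels q nup R pos = {0..<card (Levels q nup R pos)}"
      using bij_fd card_Levels by (simp add: bij_betw_def)
    show "\<forall>l\<in>Levels q nup R pos. \<forall>l'\<in>Levels q nup R pos.
        dkey q nup R pos drk l < dkey q nup R pos drk l' \<longrightarrow> tp l < tp l'"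
      unfolding Levels_pos by (auto simp: dkey tp_lev mono_fd)
  qed
qed

lemma bits_at_level:
  assumes "(a,b,k) \<in> Bits R"
  shows "y \<in> Bits R \<and> rl q nup pos y = rl q nup pos (a,b,k) \<longleftrightarrow> y = (a,b,k) \<or> (y = (b,a,k) \<and> k < R b a)"
  using assms eqn_of_eq_iff[OF assms, of y] rl_pos_eq_iff[of y "(a,b,k)"]
  by (auto simp: Bits_def)

lemma sends_at_level:
  assumes "(a,b,k) \<in> Bits R"
  shows "(\<exists>y\<in>Bits R. src y = i \<and> rl q nup pos y = rl q nup pos (a,b,k) \<and> m y)
    \<longleftrightarrow> (i = a \<and> m (a,b,k)) \<or> (i = b \<and> k < R b a \<and> m (b,a,k))"
proof -
  have "(\<exists>y\<in>Bits R. src y = i \<and> rl q nup pos y = rl q nup pos (a,b,k) \<and> m y)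
      \<longleftrightarrow> (\<exists>y. (y \<in> Bits R \<and> rl q nup pos y = rl q nup pos (a,b,k)) \<and> src y = i \<and> m y)"
    by blast
  also have "\<dots> \<longleftrightarrow> (\<exists>y. (y = (a,b,k) \<or> (y = (b,a,k) \<and> k < R b a)) \<and> src y = i \<and> m y)"
    unfolding bits_at_level[OF assms] ..
  also have "\<dots> \<longleftrightarrow> (i = a \<and> m (a,b,k)) \<or> (i = b \<and> k < R b a \<and> m (b,a,k))"
    by (auto simp: src_def)
  finally show ?thesis .
qed

lemma relay_rx_level:
  assumes x: "(a,b,k) \<in> Bits R"
  shows "relay_rx q nup R pos m (rl q nup pos (a,b,k)) \<longleftrightarrow> m (a,b,k) \<noteq> (k < R b a \<and> m (b,a,k))"
proof -
  have ab: "a \<in> Users" "b \<in> Users" "a \<noteq> b"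
    using x by (auto simp: Bits_def)
  have "rl q nup pos (a,b,k) < q"
    using fu_less_q[OF eqn_of_in_Eqns[OF x]] by (simp add: rl_pos[OF x] lev_def)
  moreover have senders: "{i \<in> Users. shiftS (q - nup i) (user_tx R pos m i) (rl q nup pos (a,b,k))}
      = (if m (a,b,k) then {a} else {}) \<union> (if k < R b a \<and> m (b,a,k) then {b} else {})"
    unfolding shiftS_user_tx_iff sends_at_level[OF x] using ab by auto
  ultimately show ?thesis
    using ab unfolding relay_rx_def senders
    by (cases "m (a,b,k)"; cases "k < R b a \<and> m (b,a,k)") simp_all
qed

lemma sos_decode_correct:
  assumes x: "x \<in> Bits R"
  shows "sos_decode q nup ndn R pos tp m x = m x"
proof -
  obtain a b k where abk: "x = (a,b,k)" by (cases x)
  have b: "a \<noteq> b" "ndn b \<le> q" "dst x = b"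
    using x abk gains_le by (auto simp: Bits_def dst_def)
  have lev: "rl q nup pos x \<in> Levels q nup R pos"
    using x by (simp add: Levels_def)
  have "tp (rl q nup pos x) < ndn b"
    using fd_reach[OF x] b by (simp add: rl_pos[OF x] tp_lev eqn_of_in_Eqns[OF x])
  with lev b have "user_rx q nup ndn R pos tp m b (tp (rl q nup pos x) + (q - ndn b))
      \<longleftrightarrow> relay_rx q nup R pos m (rl q nup pos x)"
    by (intro user_rx_relay_level[OF inj_tp])
  moreover have "(\<exists>y\<in>Bits R. src y = b \<and> rl q nup pos y = rl q nup pos x \<and> m y) \<longleftrightarrow> k < R b a \<and> m (b,a,k)"
    using sends_at_level[OF x[unfolded abk], of b m] b(1) by (simp add: abk)
  ultimately show ?thesis
    using relay_rx_level[OF x[unfolded abk], of m] b(1)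
    unfolding sos_decode_def Let_def b(3) by (simp add: abk) blast
qed

end

theorem lemma1:
  fixes q :: nat and nup ndn :: "nat \<Rightarrow> nat" and R :: "nat \<Rightarrow> nat \<Rightarrow> nat"
    and t u v w a b c d :: nat
  assumes q_ge: "\<forall>i\<in>Users. nup i \<le> q \<and> ndn i \<le> q"
    and up_perm: "{t, u, v, w} = {1, 2, 3, 4}"
    and dn_perm: "{a, b, c, d} = {1, 2, 3, 4}"
    and up_ord: "nup t \<ge> nup u" "nup u \<ge> nup v" "nup v \<ge> nup w"
    and dn_ord: "ndn a \<ge> ndn b" "ndn b \<ge> ndn c" "ndn c \<ge> ndn d"
    and c1: "R w t + R w u + R w v \<le> nup w"
    and c2: "R a d + R b d + R c d \<le> ndn d"
    and c3: "R w t + R w u + R v t + R v u + max (R v w) (R w v) \<le> nup v"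
    and c4: "R a d + R b d + R a c + R b c + max (R c d) (R d c) \<le> ndn c"
    and c5: "R u t + R v t + R w t + Phi R u v w \<le> nup u"
    and c6: "R t u + R t v + R t w + Phi R u v w \<le> nup t"
    and c7: "R u t + R u v + R u w + Phi R t v w \<le> nup t"
    and c8: "R v t + R v u + R v w + Phi R t u w \<le> nup t"
    and c9: "R w t + R w u + R w v + Phi R t u v \<le> nup t"
    and c10: "R a b + R a c + R a d + Psi R b c d \<le> ndn b"
    and c11: "R b a + R c a + R d a + Psi R b c d \<le> ndn a"
    and c12: "R a b + R c b + R d b + Psi R a c d \<le> ndn a"
    and c13: "R a c + R b c + R d c + Psi R a b d \<le> ndn a"
    and c14: "R a d + R b d + R c d + Psi R a b c \<le> ndn a"
    and E1: "max (R w u + R u v + R v w) (R u w + R w v + R v u) + R w t + R u t + R v t \<le> nup u"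
    and E2: "max (R b c + R c d + R d b) (R c b + R b d + R d c) + R a b + R a c + R a d \<le> ndn b"
    and E3: "\<forall>i j k l. {i, j, k, l} = {1, 2, 3, 4} \<longrightarrow>
               R i j + R j k + R k i + max (R l i + R l j + R l k) (R i l + R j l + R k l)
                 \<le> min (nup t) (ndn a)"
    and E4: "\<forall>i j k l. {i, j, k, l} = {1, 2, 3, 4} \<longrightarrow>
               R i j + R j k + R k l + R l i + max (R j l) (R l j) + max (R i k) (R k i)
                 \<le> min (nup t) (ndn a)"
  shows "SOS_achieves q nup ndn R t u v w a b c d"
proof -
  have distinct: "distinct [t, u, v, w]" "distinct [a, b, c, d]"
    using distinct4_set_eq[OF _ up_perm[symmetric]] distinct4_set_eq[OF _ dn_perm[symmetric]] by simp_all
  have users: "{t, u, v, w} = Users" "{a, b, c, d} = Users"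
    using up_perm dn_perm by (simp_all add: Users_def)
  have "card {e\<in>Eqns R. eqn_key R (\<lambda>i j. rank4 t u v w i) e \<le> rank4 t u v w (src x)} \<le> nup (src x)"
    if "x \<in> Bits R" for x
    unfolding card_eqn_key_le[OF distinct(1) users(1)] using Bits_D(1)[OF that] users(1)
    by (intro ranked_loads_fit[where R = R and n = nup, OF distinct(1) c1 c3 c5 E1 c6 c7 c8 c9
          E3[folded up_perm] E4[folded up_perm] min.cobounded1]) simp
  then obtain fu where "fitting_enumeration R (\<lambda>i j. rank4 t u v w i) (\<lambda>i j. nup i) fu"
    using ex_fitting_enumeration[where H = "\<lambda>i j. rank4 t u v w i" and D = "\<lambda>i j. nup i"] by blast
  moreover have "card {e\<in>Eqns R. eqn_key R (\<lambda>i j. rank4 a b c d j) e \<le> rank4 a b c d (dst x)} \<le> ndn (dst x)"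
    if "x \<in> Bits R" for x
    unfolding card_eqn_key_le[OF distinct(2) users(2)] using Bits_D(2)[OF that] users(2)
    by (intro ranked_loads_fit_downlink[where R = R and n = ndn, OF distinct(2) c2 c4 c10 E2 c11 c12 c13 c14
          E3[folded dn_perm] E4[folded dn_perm] min.cobounded2]) simp
  then obtain fd where "fitting_enumeration R (\<lambda>i j. rank4 a b c d j) (\<lambda>i j. ndn j) fd"
    using ex_fitting_enumeration[where H = "\<lambda>i j. rank4 a b c d j" and D = "\<lambda>i j. ndn j"] by blast
  ultimately interpret sos_enumeration q nup ndn R "rank4 t u v w" "rank4 a b c d" fu fd
    using q_ge by unfold_locales
  show ?thesis
    unfolding SOS_achieves_def using sos_scheme sos_decode_correct by blast
qed

end
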